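(* For every $j\in\{0,\dots,r-3\}$ and $n\in\mathbb{Z}$: $\chi_j(n)\ne0\Rightarrow n^2\equiv m_0^2\pmod{4P}$. (In particular $4P$ divides $m^2-m_0^2$ for every $m$ in the support of $\chi$.)
   Context: $r\ge3$; $p_1,\dots,p_r$ positive pairwise coprime, $p_2,\dots,p_r$ odd, $P=p_1\cdots p_r$, $\hat p_j=P/p_j$, $E=\{\pm1\}^r$, $\mathcal{N}_*(\underline\varepsilon)=\sum_j\varepsilon_j\hat p_j$, $m_0=(r-2-\sum_j1/p_j)P\in\mathbb{Z}$. $\chi:\mathbb{Z}\to\mathbb{Z}$ vanishes off $\mathfrak{S}=rP+\mathcal{N}_*(E)+2P\mathbb{Z}$ and on $\mathfrak{S}$ equals $\frac{(\ell+1)\cdots(\ell+r-3)}{(r-3)!}\varepsilon_1\cdots\varepsilon_r$, where $\underline\varepsilon\in E$ is the unique element with $\mathcal{N}_*(\underline\varepsilon)\equiv m-rP\bmod2P$ and $\ell=(m-(r-2)P-\mathcal{N}_*(\underline\varepsilon))/(2P)$. $\chi_0,\dots,\chi_{r-3}$ are the unique $2P$-periodic functions with $\chi(m)=\sum_jm^j\chi_j(m)$. *)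

theory Defs
  imports "HOL-Number_Theory.Number_Theory"
begin

definition PP :: "nat \<Rightarrow> (nat \<Rightarrow> int) \<Rightarrow> int" where
  "PP r p = (\<Prod>i=1..r. p i)"

definition phat :: "nat \<Rightarrow> (nat \<Rightarrow> int) \<Rightarrow> nat \<Rightarrow> int" where
  "phat r p j = PP r p div p j"

definition signs :: "nat \<Rightarrow> (nat \<Rightarrow> int) set" where
  "signs r = {e. (\<forall>i\<in>{1..r}. e i = 1 \<or> e i = -1) \<and> (\<forall>i. i \<notin> {1..r} \<longrightarrow> e i = 1)}"

definition Nstar :: "nat \<Rightarrow> (nat \<Rightarrow> int) \<Rightarrow> (nat \<Rightarrow> int) \<Rightarrow> int" where
  "Nstar r p e = (\<Sum>j=1..r. e j * phat r p j)"

text \<open>m_0 = (r - 2 - sum_j 1/p_j) P = (r-2) P - sum_j phat_j.\<close>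
definition m0 :: "nat \<Rightarrow> (nat \<Rightarrow> int) \<Rightarrow> int" where
  "m0 r p = (int r - 2) * PP r p - (\<Sum>j=1..r. phat r p j)"

text \<open>The function chi (integer valued; taken with values in rat).\<close>
definition chi :: "nat \<Rightarrow> (nat \<Rightarrow> int) \<Rightarrow> int \<Rightarrow> rat" where
  "chi r p m =
    (if \<exists>e\<in>signs r. [Nstar r p e = m - int r * PP r p] (mod (2 * PP r p)) then
       (let e = (THE e. e \<in> signs r \<and> [Nstar r p e = m - int r * PP r p] (mod (2 * PP r p)));
            l = (m - (int r - 2) * PP r p - Nstar r p e) div (2 * PP r p)
        in (\<Prod>k=1..r-3. of_int l + of_nat k) / fact (r - 3) * of_int (\<Prod>j=1..r. e j))
     else 0)"

end

theory Submission
  imports Defs "HOL-Computational_Algebra.Polynomial"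
begin

text \<open>
  If \<open>\<chi>\<^sub>j(n) \<noteq> 0\<close>, then \<open>\<chi>\<close> cannot vanish on the whole class \<open>n + 2P\<int>\<close>: there the
  \<open>\<chi>\<^sub>i\<close> are constant, so \<open>\<chi>\<close> would be a polynomial in \<open>m\<close> with the nonzero coefficient
  \<open>\<chi>\<^sub>j(n)\<close> and infinitely many roots. Hence \<open>n \<equiv> x (mod 2P)\<close> with \<open>x = rP + N\<^sub>*(\<epsilon>)\<close>, and
  so \<open>n\<^sup>2 \<equiv> x\<^sup>2 (mod 4P)\<close>. Splitting \<open>N\<^sub>*(\<epsilon>) = A - B\<close> into the sums of the \<open>\<hat>p\<^sub>j\<close> with
  \<open>\<epsilon>\<^sub>j = 1\<close> resp. \<open>\<epsilon>\<^sub>j = -1\<close>, one has \<open>m\<^sub>0 = (r - 2)P - A - B\<close> and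
  \<open>x\<^sup>2 - m\<^sub>0\<^sup>2 = 4(P + A)((r - 1)P - B)\<close>, which is \<open>\<equiv> -4AB \<equiv> 0 (mod 4P)\<close> because
  \<open>P\<close> divides every product \<open>\<hat>p\<^sub>j \<hat>p\<^sub>k\<close> with \<open>j \<noteq> k\<close>.
\<close>

lemma periodic_add_nat_multiple:
  fixes f :: "int \<Rightarrow> 'b"
  assumes "\<And>n. f (n + a) = f n"
  shows "f (n + int k * a) = f n"
proof (induction k)
  case (Suc k)
  have "f (n + int (Suc k) * a) = f ((n + int k * a) + a)"
    by (simp add: algebra_simps)
  with Suc assms show ?case by simp
qed simp

lemma coeffs_eq_0_if_vanishing_on_progression:
  fixes c :: "nat \<Rightarrow> 'a::{idom, ring_char_0}"
  assumes "a \<noteq> 0"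
    and vanish: "\<And>k::nat. (\<Sum>i\<le>d. (b + of_nat k * a) ^ i * c i) = 0"
    and "i \<le> d"
  shows "c i = 0"
proof -
  define q where "q = (\<Sum>i\<le>d. monom (c i) i)"
  have "range (\<lambda>k::nat. b + of_nat k * a) \<subseteq> {x. poly q x = 0}"
    using vanish by (auto simp: q_def poly_sum poly_monom mult.commute)
  moreover have "inj (\<lambda>k::nat. b + of_nat k * a)"
    using \<open>a \<noteq> 0\<close> by (auto simp: inj_def)
  ultimately have "infinite {x. poly q x = 0}"
    using range_inj_infinite finite_subset by blast
  then have "q = 0"
    using poly_roots_finite by blast
  then have "coeff q i = 0"
    by simp
  then show ?thesis
    using \<open>i \<le> d\<close> by (simp add: q_def coeff_sum)
qed

lemma nonvanishing_on_progression_if_periodic_coeffs: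
  fixes c :: "nat \<Rightarrow> int \<Rightarrow> 'a::{idom, ring_char_0}"
  assumes "a \<noteq> 0"
    and periodic: "\<And>i m. i \<le> d \<Longrightarrow> c i (m + a) = c i m"
    and expansion: "\<And>m. f m = (\<Sum>i\<le>d. of_int m ^ i * c i m)"
    and "i \<le> d" "c i n \<noteq> 0"
  shows "\<exists>k::nat. f (n + int k * a) \<noteq> 0"
proof (rule ccontr)
  assume "\<nexists>k. f (n + int k * a) \<noteq> 0"
  moreover have "f (n + int k * a) = (\<Sum>i\<le>d. (of_int n + of_nat k * of_int a) ^ i * c i n)" for k
  proof -
    have "c i (n + int k * a) = c i n" if "i \<le> d" for i
      using periodic[OF that] by (rule periodic_add_nat_multiple)
    then show ?thesis
      using expansion by simp
  qed
  ultimately have "(\<Sum>i\<le>d. (of_int n + of_nat k * of_int a) ^ i * c i n) = 0" for k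
    by metis
  moreover have "of_int a \<noteq> (0::'a)"
    using \<open>a \<noteq> 0\<close> by simp
  ultimately have "c i n = 0"
    using coeffs_eq_0_if_vanishing_on_progression \<open>i \<le> d\<close> by metis
  with \<open>c i n \<noteq> 0\<close> show False ..
qed

lemma cong_square_double_modulus:
  fixes a b m :: int
  assumes "[a = b] (mod 2 * m)"
  shows "[a\<^sup>2 = b\<^sup>2] (mod 4 * m)"
proof -
  obtain t where "a - b = 2 * m * t"
    using assms by (auto simp: cong_iff_dvd_diff)
  then have t: "a = b + 2 * m * t"
    by simp
  have "a\<^sup>2 - b\<^sup>2 = 4 * m * (b * t + m * t\<^sup>2)"
    unfolding t by (simp add: power2_eq_square algebra_simps)
  then show ?thesis
    by (simp add: cong_iff_dvd_diff)
qed

lemma chi_nonzero_imp_cong_sign_class: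
  assumes "chi r p m \<noteq> 0"
  obtains e where "e \<in> signs r" "[m = int r * PP r p + Nstar r p e] (mod 2 * PP r p)"
proof -
  obtain e where "e \<in> signs r" and "[Nstar r p e = m - int r * PP r p] (mod 2 * PP r p)"
    using assms unfolding chi_def by (auto split: if_splits)
  moreover from this(2) have "[m = int r * PP r p + Nstar r p e] (mod 2 * PP r p)"
    by (simp add: cong_iff_dvd_diff dvd_diff_commute algebra_simps)
  ultimately show ?thesis
    using that by blast
qed

lemma phat_eq_prod:
  assumes "j \<in> {1..r}" "p j \<noteq> 0"
  shows "phat r p j = (\<Prod>i\<in>{1..r}-{j}. p i)"
  using assms unfolding phat_def PP_def by (simp add: prod.remove)

lemma PP_eq_mult_phat:
  assumes "j \<in> {1..r}"
  shows "PP r p = p j * phat r p j"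
proof (cases "p j = 0")
  case True
  then show ?thesis
    using assms unfolding PP_def by (auto simp: prod_zero_iff)
next
  case False
  then show ?thesis
    using assms by (simp add: phat_eq_prod PP_def prod.remove)
qed

lemma PP_dvd_phat_mult_phat:
  assumes "j \<in> {1..r}" "k \<in> {1..r}" "j \<noteq> k"
  shows "PP r p dvd phat r p j * phat r p k"
proof (cases "p j = 0")
  case True
  then show ?thesis
    using PP_eq_mult_phat[OF assms(1)] by (simp add: phat_def)
next
  case False
  have "phat r p j = (\<Prod>i\<in>{1..r}-{j}. p i)"
    using assms(1) False by (rule phat_eq_prod)
  also have "\<dots> = p k * (\<Prod>i\<in>{1..r}-{j}-{k}. p i)"
    by (rule prod.remove) (use assms in auto)
  finally have "phat r p j * phat r p k = PP r p * (\<Prod>i\<in>{1..r}-{j}-{k}. p i)"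
    using PP_eq_mult_phat[OF assms(2), of p] by (simp add: algebra_simps)
  then show ?thesis
    by simp
qed

lemma sign_class_square_cong_m0_square:
  assumes "e \<in> signs r"
  shows "[(int r * PP r p + Nstar r p e)\<^sup>2 = (m0 r p)\<^sup>2] (mod 4 * PP r p)"
proof -
  define S where "S = {j\<in>{1..r}. e j = 1}"
  define T where "T = {j\<in>{1..r}. e j \<noteq> 1}"
  define A where "A = (\<Sum>j\<in>S. phat r p j)"
  define B where "B = (\<Sum>j\<in>T. phat r p j)"
  define P where "P = PP r p"
  have split: "{1..r} = S \<union> T" "S \<inter> T = {}" "finite S" "finite T"
    unfolding S_def T_def by auto
  have "e j = 1" if "j \<in> S" for j
    using that unfolding S_def by auto
  moreover have "e j = -1" if "j \<in> T" for j
    using assms that unfolding T_def signs_def by auto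
  ultimately have N: "Nstar r p e = A - B"
    unfolding Nstar_def A_def B_def split(1) sum.union_disjoint[OF split(3,4,2)]
    by (simp add: sum_negf)
  have M: "m0 r p = (int r - 2) * P - (A + B)"
    unfolding m0_def A_def B_def P_def split(1) by (simp add: sum.union_disjoint[OF split(3,4,2)])
  have "P dvd A * B"
    unfolding A_def B_def sum_product P_def
    by (intro dvd_sum PP_dvd_phat_mult_phat) (use split in auto)
  then obtain t where t: "A * B = P * t"
    by blast
  have "(int r * P + (A - B))\<^sup>2 - ((int r - 2) * P - (A + B))\<^sup>2
      = 4 * (P + A) * ((int r - 1) * P - B)"
    by (simp add: power2_eq_square algebra_simps)
  also have "\<dots> = 4 * P * ((int r - 1) * P - B + A * (int r - 1) - t)"
    by (simp add: algebra_simps t[symmetric])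
  finally show ?thesis
    unfolding N M P_def cong_iff_dvd_diff by (metis dvd_triv_left)
qed

theorem proposition4p8:
  fixes r :: nat and p :: "nat \<Rightarrow> int" and c :: "nat \<Rightarrow> int \<Rightarrow> rat"
  assumes r3: "r \<ge> 3"
    and pos: "\<forall>i\<in>{1..r}. p i > 0"
    and copr: "\<forall>i\<in>{1..r}. \<forall>j\<in>{1..r}. i \<noteq> j \<longrightarrow> coprime (p i) (p j)"
    and odd: "\<forall>i\<in>{2..r}. odd (p i)"
    and per: "\<forall>j\<le>r-3. \<forall>n. c j (n + 2 * PP r p) = c j n"
    and dec: "\<forall>m. chi r p m = (\<Sum>j\<le>r-3. of_int m ^ j * c j m)"
  shows "\<forall>j\<le>r-3. \<forall>n. c j n \<noteq> 0 \<longrightarrow> [n^2 = (m0 r p)^2] (mod (4 * PP r p))"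
proof (intro allI impI)
  fix j n assume "j \<le> r - 3" and "c j n \<noteq> 0"
  define P where "P = PP r p"
  have "P > 0"
    unfolding P_def PP_def using pos by (intro prod_pos) auto
  have "\<exists>k::nat. chi r p (n + int k * (2 * P)) \<noteq> 0"
  proof (rule nonvanishing_on_progression_if_periodic_coeffs[where d = "r - 3" and i = j])
    show "c i (m + 2 * P) = c i m" if "i \<le> r - 3" for i m
      using per that unfolding P_def by blast
  qed (use \<open>P > 0\<close> dec \<open>j \<le> r - 3\<close> \<open>c j n \<noteq> 0\<close> in auto)
  then obtain k where "chi r p (n + int k * (2 * P)) \<noteq> 0" ..
  then obtain e where "e \<in> signs r"
      and "[n + int k * (2 * P) = int r * P + Nstar r p e] (mod 2 * P)"
    using chi_nonzero_imp_cong_sign_class unfolding P_def by blast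
  moreover have "[n = n + int k * (2 * P)] (mod 2 * P)"
    by (simp add: cong_iff_dvd_diff)
  ultimately have "[n = int r * P + Nstar r p e] (mod 2 * P)"
    using cong_trans by blast
  then show "[n^2 = (m0 r p)^2] (mod (4 * PP r p))"
    using cong_square_double_modulus sign_class_square_cong_m0_square[OF \<open>e \<in> signs r\<close>]
    unfolding P_def by (blast intro: cong_trans)
qed

end
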